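(* There exist absolute constants $\lambda_0>0$ and $C>0$ such that the following holds for every $0<\lambda\le\lambda_0$. Let $F$ be a bipartite graph with parts $V_0,V_1$, each of size $I$, such that $d_F(v)\ge(1-\lambda)I$ for every $v\in V_0\cup V_1$. Then there exists a probability distribution on perfect matchings $M$ of $F$ (viewed as sets of edges) which is $C/I$-spread, i.e. for every set $T$ of edges of $F$, $\mathbb{P}(M\supseteq T)\le (C/I)^{|T|}$.
   Context: A random set $S$ is $p$-spread if for all sets $T$, $\mathbb{P}(S\supseteq T)\le p^{|T|}$. $d_F(v)$ denotes the degree of $v$ in $F$. *)

theory Defs
  imports "HOL-Probability.Probability"
begin

text \<open>A bipartite graph with parts V0, V1 (vertices are naturals; the two parts are
  kept apart by the order in the pair) is given by its edge set
  E \<subseteq> V0 \<times> V1; an edge (a,b) joins a \<in> V0 and b \<in> V1.\<close>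

definition bip_graph :: "nat set \<Rightarrow> nat set \<Rightarrow> (nat \<times> nat) set \<Rightarrow> bool" where
  "bip_graph V0 V1 E \<longleftrightarrow> finite V0 \<and> finite V1 \<and> E \<subseteq> V0 \<times> V1"

definition deg0 :: "(nat \<times> nat) set \<Rightarrow> nat \<Rightarrow> nat" where
  "deg0 E a = card {b. (a, b) \<in> E}"

definition deg1 :: "(nat \<times> nat) set \<Rightarrow> nat \<Rightarrow> nat" where
  "deg1 E b = card {a. (a, b) \<in> E}"

definition perfect_matching ::
  "nat set \<Rightarrow> nat set \<Rightarrow> (nat \<times> nat) set \<Rightarrow> (nat \<times> nat) set \<Rightarrow> bool" where
  "perfect_matching V0 V1 E M \<longleftrightarrow> M \<subseteq> E \<and>
     (\<forall>a\<in>V0. \<exists>!b. (a, b) \<in> M) \<and> (\<forall>b\<in>V1. \<exists>!a. (a, b) \<in> M)"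

end

theory Submission
  imports Defs "HOL-Combinatorics.Permutations"
begin

text \<open>We take the uniform distribution on perfect matchings. Let \<open>N\<close> be their number and
  \<open>d \<le> \<lambda>I\<close> the largest number of non-neighbours of a vertex.

  Lower bound on \<open>N\<close>: a uniformly random bijection \<open>V\<^sub>0 \<rightarrow> V\<^sub>1\<close> uses on average at most \<open>d\<close>
  non-edges, so at least \<open>I!/2\<close> bijections use at most \<open>2d\<close> of them. Such a bijection is turned
  into a perfect matching by exchanging the image of every bad vertex with that of a distinct
  suitable partner; the repaired matching together with the bad set and the choice of partners
  determines the bijection, which gives \<open>I! \<le> 2 \<cdot> 3\<^sup>I \<cdot> N\<close>.

  Upper bound for a partial matching \<open>T\<close> with \<open>t\<close> edges: if \<open>2t \<le> I\<close>, switching the image of an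
  endpoint of an edge of \<open>T\<close> with that of a suitable vertex shows that each edge costs a factor
  \<open>4/I\<close>. If \<open>2t > I\<close>, there are at most \<open>(I - t)!\<close> matchings containing \<open>T\<close>, and
  \<open>I\<^sup>I \<le> 3\<^sup>I I!\<close> together with the lower bound on \<open>N\<close> gives the factor \<open>162/I\<close> per edge.\<close>

text \<open>A perfect matching of \<open>E \<subseteq> A \<times> B\<close> is represented by the bijection \<open>A \<rightarrow> B\<close> it induces;
  extensionality makes the representation unique.\<close>

definition matchings :: "('a \<times> 'b) set \<Rightarrow> 'a set \<Rightarrow> 'b set \<Rightarrow> ('a \<Rightarrow> 'b) set" where
  "matchings E A B = {s \<in> A \<rightarrow>\<^sub>E B. bij_betw s A B \<and> (\<forall>a\<in>A. (a, s a) \<in> E)}"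

lemma matchings_iff:
  "s \<in> matchings E A B \<longleftrightarrow> s \<in> extensional A \<and> bij_betw s A B \<and> (\<forall>a\<in>A. (a, s a) \<in> E)"
  by (auto simp: matchings_def PiE_iff bij_betw_apply)

lemma finite_matchings: "finite A \<Longrightarrow> finite B \<Longrightarrow> finite (matchings E A B)"
  unfolding matchings_def by (rule finite_subset[OF _ finite_PiE]) auto

lemma matchings_mono: "E \<subseteq> E' \<Longrightarrow> matchings E A B \<subseteq> matchings E' A B"
  unfolding matchings_def by auto

lemma matchings_comp_permutes:
  assumes s: "s \<in> matchings UNIV A B" and \<sigma>: "\<sigma> permutes A"
    and edges: "\<forall>x\<in>A. (x, s (\<sigma> x)) \<in> E"
  shows "s \<circ> \<sigma> \<in> matchings E A B"
proof -
  have "s \<circ> \<sigma> \<in> extensional A"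
    using s permutes_not_in[OF \<sigma>] by (auto simp: matchings_iff extensional_def)
  moreover have "bij_betw (s \<circ> \<sigma>) A B"
    using s bij_betw_trans[OF permutes_imp_bij[OF \<sigma>]] by (auto simp: matchings_iff)
  ultimately show ?thesis using edges by (simp add: matchings_iff)
qed

lemma bij_betw_restrict_matchings:
  assumes a: "a \<in> A" and b: "b \<in> B" and ab: "(a, b) \<in> E"
  shows "bij_betw (\<lambda>s. restrict s (A - {a}))
           {s \<in> matchings E A B. s a = b} (matchings E (A - {a}) (B - {b}))"
proof (rule bij_betw_byWitness[where f' = "\<lambda>t. t(a := b)"])
  show "\<forall>s\<in>{s \<in> matchings E A B. s a = b}. (restrict s (A - {a}))(a := b) = s"
    by (auto simp: matchings_iff extensional_def fun_eq_iff)
  show "\<forall>t\<in>matchings E (A - {a}) (B - {b}). restrict (t(a := b)) (A - {a}) = t"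
    by (auto simp: matchings_iff extensional_def fun_eq_iff)
  show "(\<lambda>s. restrict s (A - {a})) ` {s \<in> matchings E A B. s a = b}
          \<subseteq> matchings E (A - {a}) (B - {b})"
  proof (rule image_subsetI)
    fix s assume "s \<in> {s \<in> matchings E A B. s a = b}"
    then have s: "s \<in> matchings E A B" "s a = b" by auto
    then have "bij_betw s (A - {a}) (B - {b})"
      using a b by (intro bij_betw_DiffI) (auto simp: matchings_iff)
    then show "restrict s (A - {a}) \<in> matchings E (A - {a}) (B - {b})"
      using s by (auto simp: matchings_iff)
  qed
  show "(\<lambda>t. t(a := b)) ` matchings E (A - {a}) (B - {b}) \<subseteq> {s \<in> matchings E A B. s a = b}"
  proof (rule image_subsetI)
    fix t assume t: "t \<in> matchings E (A - {a}) (B - {b})"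
    then have "bij_betw (t(a := b)) (A - {a}) (B - {b})"
      by (subst bij_betw_cong[of _ _ t]) (auto simp: matchings_iff)
    then have "bij_betw (t(a := b)) ((A - {a}) \<union> {a}) ((B - {b}) \<union> {b})"
      by (rule bij_betw_combine) auto
    then have "bij_betw (t(a := b)) A B"
      using a b by (simp add: insert_absorb)
    then show "t(a := b) \<in> {s \<in> matchings E A B. s a = b}"
      using t a ab by (auto simp: matchings_iff extensional_def)
  qed
qed

lemma card_matchings_expand:
  assumes "finite A" "finite B" "a \<in> A"
  shows "card (matchings E A B) = (\<Sum>b\<in>B \<inter> E `` {a}. card (matchings E (A - {a}) (B - {b})))"
proof -
  have "matchings E A B = (\<Union>b\<in>B \<inter> E `` {a}. {s \<in> matchings E A B. s a = b})"
    using assms(3) by (auto simp: matchings_def)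
  then have "card (matchings E A B) = card (\<Union>b\<in>B \<inter> E `` {a}. {s \<in> matchings E A B. s a = b})"
    by (rule arg_cong)
  also have "\<dots> = (\<Sum>b\<in>B \<inter> E `` {a}. card {s \<in> matchings E A B. s a = b})"
    by (rule card_UN_disjoint) (use assms finite_matchings[of A B E] in auto)
  also have "\<dots> = (\<Sum>b\<in>B \<inter> E `` {a}. card (matchings E (A - {a}) (B - {b})))"
  proof (rule sum.cong[OF refl])
    fix b assume "b \<in> B \<inter> E `` {a}"
    then show "card {s \<in> matchings E A B. s a = b} = card (matchings E (A - {a}) (B - {b}))"
      using bij_betw_same_card[OF bij_betw_restrict_matchings[of a A b B E]] assms(3)
      by auto
  qed
  finally show ?thesis .
qed

lemma card_matchings_UNIV:
  "finite A \<Longrightarrow> finite B \<Longrightarrow> card A = card B \<Longrightarrow> card (matchings UNIV A B) = fact (card A)"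
proof (induction "card A" arbitrary: A B)
  case 0
  then have "matchings UNIV A B = {\<lambda>_. undefined}"
    by (auto simp: matchings_def bij_betw_def)
  then show ?case using 0 by simp
next
  case (Suc n)
  then obtain a where a: "a \<in> A" by (metis card_eq_SucD insertI1)
  have "card (matchings UNIV A B) = (\<Sum>b\<in>B. card (matchings UNIV (A - {a}) (B - {b})))"
    using card_matchings_expand[OF Suc.prems(1,2) a, of UNIV] by (simp add: Image_def)
  also have "\<dots> = (\<Sum>b\<in>B. fact n)"
  proof (rule sum.cong[OF refl])
    fix b assume "b \<in> B"
    then have "card (A - {a}) = n" "card (B - {b}) = n"
      using Suc.hyps(2) Suc.prems a by auto
    then show "card (matchings UNIV (A - {a}) (B - {b})) = fact n"
      using Suc.hyps(1)[of "A - {a}" "B - {b}"] Suc.prems by simp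
  qed
  also have "\<dots> = fact (card A)"
    using Suc.hyps(2) Suc.prems by (metis fact_Suc sum_constant)
  finally show ?case .
qed

lemma card_matchings_UNIV_point:
  assumes "finite A" "finite B" "card A = card B" "a \<in> A" "b \<in> B"
  shows "card {s \<in> matchings UNIV A B. s a = b} = fact (card A - 1)"
  using bij_betw_same_card[OF bij_betw_restrict_matchings[of a A b B UNIV]]
    card_matchings_UNIV[of "A - {a}" "B - {b}"] assms by simp

section \<open>Most bijections have few defects\<close>

definition defects :: "('a \<times> 'b) set \<Rightarrow> 'a set \<Rightarrow> ('a \<Rightarrow> 'b) \<Rightarrow> 'a set" where
  "defects E A s = {a \<in> A. (a, s a) \<notin> E}"

lemma defects_subset: "defects E A s \<subseteq> A"
  by (auto simp: defects_def)

lemma sum_card_defects_le: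
  assumes fin: "finite A" "finite B" and card_eq: "card A = card B"
    and missing: "\<forall>a\<in>A. card (B - E `` {a}) \<le> d"
  shows "(\<Sum>s\<in>matchings UNIV A B. card (defects E A s)) \<le> d * fact (card A)"
proof -
  define U where "U = matchings UNIV A B"
  have finU: "finite U"
    using finite_matchings[OF fin] by (simp add: U_def)
  have per_point: "card {s \<in> U. (a, s a) \<notin> E} \<le> d * fact (card A - 1)" if a: "a \<in> A" for a
  proof -
    have "{s \<in> U. (a, s a) \<notin> E} = (\<Union>b\<in>B - E `` {a}. {s \<in> U. s a = b})"
      using a by (auto simp: U_def matchings_def)
    then have "card {s \<in> U. (a, s a) \<notin> E} = card (\<Union>b\<in>B - E `` {a}. {s \<in> U. s a = b})"
      by (rule arg_cong)
    also have "\<dots> = (\<Sum>b\<in>B - E `` {a}. card {s \<in> U. s a = b})"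
      by (rule card_UN_disjoint) (use fin finU in auto)
    also have "\<dots> = card (B - E `` {a}) * fact (card A - 1)"
      using card_matchings_UNIV_point[OF fin card_eq a] by (simp add: U_def)
    also have "\<dots> \<le> d * fact (card A - 1)"
      using missing a by simp
    finally show ?thesis .
  qed
  have "(\<Sum>s\<in>U. card (defects E A s)) = (\<Sum>a\<in>A. card {s \<in> U. (a, s a) \<notin> E})"
    using sum.swap_restrict[OF finU fin(1), of "\<lambda>_ _. 1::nat" "\<lambda>s a. (a, s a) \<notin> E"]
    by (simp add: defects_def)
  also have "\<dots> \<le> card A * (d * fact (card A - 1))"
    using sum_bounded_above[of A "\<lambda>a. card {s \<in> U. (a, s a) \<notin> E}"] per_point by simp
  also have "\<dots> \<le> d * fact (card A)"
    by (cases "card A") (auto simp: algebra_simps)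
  finally show ?thesis by (simp add: U_def)
qed

lemma fact_le_card_few_defects:
  assumes fin: "finite A" "finite B" and card_eq: "card A = card B"
    and missing: "\<forall>a\<in>A. card (B - E `` {a}) \<le> d"
  shows "fact (card A) \<le> 2 * card {s \<in> matchings UNIV A B. card (defects E A s) \<le> 2 * d}"
proof -
  define U where "U = matchings UNIV A B"
  define L where "L = {s \<in> U. card (defects E A s) \<le> 2 * d}"
  define H where "H = {s \<in> U. 2 * d < card (defects E A s)}"
  have finU: "finite U"
    using finite_matchings[OF fin] by (simp add: U_def)
  have "card H * (2 * d + 1) \<le> (\<Sum>s\<in>H. card (defects E A s))"
    using sum_bounded_below[of H "2 * d + 1" "\<lambda>s. card (defects E A s)"] by (auto simp: H_def)
  also have "\<dots> \<le> (\<Sum>s\<in>U. card (defects E A s))"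
    by (rule sum_mono2[OF finU]) (auto simp: H_def)
  also have "\<dots> \<le> d * fact (card A)"
    using sum_card_defects_le[OF fin card_eq missing] by (simp add: U_def)
  finally have "(2 * d + 1) * (2 * card H) \<le> (2 * d + 1) * fact (card A)"
    by (simp add: algebra_simps)
  then have "2 * card H \<le> fact (card A)"
    by (simp only: mult_le_cancel1)
  moreover have "card U = card L + card H"
  proof -
    have "U = L \<union> H" "L \<inter> H = {}"
      by (auto simp: L_def H_def)
    then show ?thesis
      using finU by (metis card_Un_disjoint finite_Un)
  qed
  moreover have "card U = fact (card A)"
    using card_matchings_UNIV[OF fin card_eq] by (simp add: U_def)
  ultimately show ?thesis by (simp add: L_def U_def)
qed

section \<open>Repairing defects: a lower bound on the number of perfect matchings\<close>

definition missing_degree_le :: "('a \<times> 'b) set \<Rightarrow> 'a set \<Rightarrow> 'b set \<Rightarrow> nat \<Rightarrow> bool" where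
  "missing_degree_le E A B d \<longleftrightarrow>
     (\<forall>a\<in>A. card (B - E `` {a}) \<le> d) \<and> (\<forall>b\<in>B. card (A - E\<inverse> `` {b}) \<le> d)"

lemma fun_upd_inj_PiE:
  assumes "f \<in> Pi\<^sub>E D C" "inj_on f D" "y \<in> C x" "y \<notin> f ` D" "x \<notin> D"
  shows "f(x := y) \<in> Pi\<^sub>E (insert x D) C" "inj_on (f(x := y)) (insert x D)"
proof -
  show "f(x := y) \<in> Pi\<^sub>E (insert x D) C"
    using assms(3,1) by (rule PiE_fun_upd)
  show "inj_on (f(x := y)) (insert x D)"
    using inj_on_fun_updI[OF assms(2,4), of x] assms(4,5)
    by (simp add: inj_on_insert fun_upd_image) blast
qed

lemma inj_on_fun_upd_PiE:
  assumes "x \<notin> D"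
  shows "inj_on (\<lambda>(f, y). f(x := y)) (Pi\<^sub>E D C \<times> Y)"
proof (rule inj_onI)
  fix p q assume "p \<in> Pi\<^sub>E D C \<times> Y" "q \<in> Pi\<^sub>E D C \<times> Y"
    and upd_eq: "(\<lambda>(f, y). f(x := y)) p = (\<lambda>(f, y). f(x := y)) q"
  obtain f y g z where pq: "p = (f, y)" "q = (g, z)"
    by (cases p, cases q)
  then have "f \<in> Pi\<^sub>E D C" "g \<in> Pi\<^sub>E D C"
    using \<open>p \<in> _\<close> \<open>q \<in> _\<close> by simp_all
  then have "f x = g x"
    using PiE_arb[OF _ assms] by metis
  moreover have eq: "f(x := y) = g(x := z)"
    using upd_eq pq by simp
  ultimately have "f = g"
    by (metis fun_upd_triv fun_upd_upd)
  then show "p = q"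
    using pq fun_upd_eqD[OF eq] by simp
qed

lemma card_inj_PiE_insert_ge:
  assumes fin: "finite D" "\<forall>a\<in>insert x D. finite (C a)" and x: "x \<notin> D"
  shows "card {f \<in> Pi\<^sub>E D C. inj_on f D} * (card (C x) - card D)
    \<le> card {f \<in> Pi\<^sub>E (insert x D) C. inj_on f (insert x D)}"
proof -
  define V where "V = {f \<in> Pi\<^sub>E D C. inj_on f D}"
  define W where "W = (SIGMA f:V. C x - f ` D)"
  have "finite (Pi\<^sub>E D C)"
    using fin by (intro finite_PiE) auto
  then have finV: "finite V"
    by (rule rev_finite_subset) (auto simp: V_def)
  have "card (C x) - card D \<le> card (C x - f ` D)" for f
    using diff_card_le_card_Diff[OF finite_imageI[OF fin(1)], of "C x" f] card_image_le[OF fin(1), of f]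
    by linarith
  then have "card V * (card (C x) - card D) \<le> (\<Sum>f\<in>V. card (C x - f ` D))"
    using sum_bounded_below[of V "card (C x) - card D" "\<lambda>f. card (C x - f ` D)"] by simp
  also have "\<dots> = card W"
    using finV fin by (simp add: W_def card_SigmaI)
  also have "\<dots> \<le> card {f \<in> Pi\<^sub>E (insert x D) C. inj_on f (insert x D)}"
  proof (rule card_inj_on_le)
    show "(\<lambda>(f, y). f(x := y)) ` W \<subseteq> {f \<in> Pi\<^sub>E (insert x D) C. inj_on f (insert x D)}"
    proof
      fix h assume "h \<in> (\<lambda>(f, y). f(x := y)) ` W"
      then obtain f y where "f \<in> V" "y \<in> C x - f ` D" and h: "h = f(x := y)"
        by (auto simp: W_def)
      then show "h \<in> {f \<in> Pi\<^sub>E (insert x D) C. inj_on f (insert x D)}"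
        using fun_upd_inj_PiE[of f D C y x] x by (simp add: V_def)
    qed
    have "W \<subseteq> Pi\<^sub>E D C \<times> UNIV"
      by (auto simp: W_def V_def)
    then show "inj_on (\<lambda>(f, y). f(x := y)) W"
      using inj_on_fun_upd_PiE[OF x] by (rule inj_on_subset[rotated])
    have "finite (Pi\<^sub>E (insert x D) C)"
      using fin by (intro finite_PiE) auto
    then show "finite {f \<in> Pi\<^sub>E (insert x D) C. inj_on f (insert x D)}"
      by (rule rev_finite_subset) auto
  qed
  finally show ?thesis
    by (simp add: V_def)
qed

lemma card_inj_PiE_ge:
  assumes "finite D" "\<forall>a\<in>D. finite (C a) \<and> m \<le> card (C a)"
  shows "(\<Prod>j<card D. m - j) \<le> card {f \<in> Pi\<^sub>E D C. inj_on f D}"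
  using assms
proof (induction D rule: finite_induct)
  case empty
  have "{f \<in> Pi\<^sub>E {} C. inj_on f {}} = {\<lambda>_. undefined}"
    by auto
  then show ?case
    by simp
next
  case (insert x D)
  have "(\<Prod>j<card (insert x D). m - j) = (\<Prod>j<card D. m - j) * (m - card D)"
    using insert.hyps by simp
  also have "\<dots> \<le> card {f \<in> Pi\<^sub>E D C. inj_on f D} * (card (C x) - card D)"
    using insert.IH insert.prems by (intro mult_mono diff_le_mono) simp_all
  also have "\<dots> \<le> card {f \<in> Pi\<^sub>E (insert x D) C. inj_on f (insert x D)}"
    using insert.hyps insert.prems by (intro card_inj_PiE_insert_ge) simp_all
  finally show ?case .
qed

text \<open>If \<open>f ` D\<close> is disjoint from \<open>D\<close> and \<open>f\<close> is injective on \<open>D\<close>, this is the product of the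
  transpositions exchanging \<open>x\<close> and \<open>f x\<close> for \<open>x \<in> D\<close>.\<close>

definition swap_along :: "'a set \<Rightarrow> ('a \<Rightarrow> 'a) \<Rightarrow> 'a \<Rightarrow> 'a" where
  "swap_along D f x = (if x \<in> D then f x else if x \<in> f ` D then inv_into D f x else x)"

lemma swap_along_involution:
  assumes "f ` D \<inter> D = {}" "inj_on f D"
  shows "swap_along D f (swap_along D f x) = x"
  using assms by (auto simp: swap_along_def disjoint_iff inv_into_into f_inv_into_f)

lemma swap_along_permutes:
  assumes "D \<subseteq> A" "f ` D \<subseteq> A - D" "inj_on f D"
  shows "swap_along D f permutes A"
proof (rule bij_imp_permutes)
  have "f ` D \<inter> D = {}"
    using assms(2) by auto
  then show "bij_betw (swap_along D f) A A"
    using assms swap_along_involution[of f D]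
    by (intro bij_betw_byWitness[where f' = "swap_along D f"])
      (auto simp: swap_along_def inv_into_into subset_iff)
  show "x \<notin> A \<Longrightarrow> swap_along D f x = x" for x
    using assms by (auto simp: swap_along_def)
qed

text \<open>Exchanging the images of \<open>a\<close> and of a partner \<open>x\<close> creates the edges \<open>(a, s x)\<close> and
  \<open>(x, s a)\<close>.\<close>

definition partners :: "('a \<times> 'b) set \<Rightarrow> 'a set \<Rightarrow> ('a \<Rightarrow> 'b) \<Rightarrow> 'a set \<Rightarrow> 'a \<Rightarrow> 'a set" where
  "partners E A s X a = {x \<in> A - X. (a, s x) \<in> E \<and> (x, s a) \<in> E}"

lemma partners_subset: "partners E A s X a \<subseteq> A - X"
  by (auto simp: partners_def)

lemma card_partners_ge:
  assumes fin: "finite A" "finite B" and s: "s \<in> matchings UNIV A B" and a: "a \<in> A"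
    and X: "X \<subseteq> A" and missing: "missing_degree_le E A B d"
  shows "card A - card X - 2 * d \<le> card (partners E A s X a)"
proof -
  let ?P = "partners E A s X a"
  let ?Q = "{x \<in> A. s x \<in> B - E `` {a}}"
  have sA: "inj_on s A" "s ` A = B"
    using s by (auto simp: matchings_iff bij_betw_def)
  have "A - ?P \<subseteq> (X \<union> ?Q) \<union> (A - E\<inverse> `` {s a})"
    using sA by (auto simp: partners_def)
  then have "card (A - ?P) \<le> card (X \<union> ?Q) + card (A - E\<inverse> `` {s a})"
    using fin X by (intro order.trans[OF card_mono card_Un_le]) (auto intro: finite_subset)
  also have "\<dots> \<le> card X + card ?Q + card (A - E\<inverse> `` {s a})"
    using card_Un_le[of X ?Q] by simp
  finally have "card (A - ?P) \<le> card X + card ?Q + card (A - E\<inverse> `` {s a})" .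
  moreover have "card ?Q \<le> card (B - E `` {a})"
    using fin sA by (intro card_inj_on_le[of s]) (auto intro: inj_on_subset)
  moreover have "card (B - E `` {a}) \<le> d" "card (A - E\<inverse> `` {s a}) \<le> d"
    using missing a imageI[OF a, of s] sA(2) by (simp_all add: missing_degree_le_def)
  ultimately have "card (A - ?P) \<le> card X + 2 * d"
    by linarith
  moreover have "?P \<subseteq> A"
    by (auto simp: partners_def)
  ultimately show ?thesis
    using card_Diff_subset[of ?P A] fin by (auto simp: card_mono finite_subset)
qed

definition repairs :: "('a \<times> 'b) set \<Rightarrow> 'a set \<Rightarrow> ('a \<Rightarrow> 'b) \<Rightarrow> ('a \<Rightarrow> 'a) set" where
  "repairs E A s =
    {f \<in> Pi\<^sub>E (defects E A s) (partners E A s (defects E A s)). inj_on f (defects E A s)}"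

lemma finite_repairs:
  assumes "finite A"
  shows "finite (repairs E A s)"
proof -
  have "finite (defects E A s)"
    using finite_subset[OF defects_subset assms] .
  moreover have "finite (partners E A s (defects E A s) a)" for a
    using finite_subset[OF partners_subset[of E A s "defects E A s" a]] assms by simp
  ultimately have "finite (Pi\<^sub>E (defects E A s) (partners E A s (defects E A s)))"
    by (rule finite_PiE)
  then show ?thesis
    unfolding repairs_def by (rule rev_finite_subset) blast
qed

lemma card_repairs_ge:
  assumes fin: "finite A" "finite B" and s: "s \<in> matchings UNIV A B"
    and missing: "missing_degree_le E A B d"
  shows "(\<Prod>j<card (defects E A s). card A - card (defects E A s) - 2 * d - j) \<le> card (repairs E A s)"
proof -
  let ?D = "defects E A s"
  have "\<forall>a\<in>?D. finite (partners E A s ?D a) \<and> card A - card ?D - 2 * d \<le> card (partners E A s ?D a)"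
  proof
    fix a assume "a \<in> ?D"
    then have "a \<in> A"
      using defects_subset[of E A s] by blast
    then show "finite (partners E A s ?D a) \<and> card A - card ?D - 2 * d \<le> card (partners E A s ?D a)"
      using card_partners_ge[OF fin s _ defects_subset[of E A s] missing, of a]
        finite_subset[OF partners_subset[of E A s ?D a]] fin(1)
      by simp
  qed
  then show ?thesis
    unfolding repairs_def by (rule card_inj_PiE_ge[OF finite_subset[OF defects_subset fin(1)]])
qed

lemma matchings_comp_swap_along:
  assumes s: "s \<in> matchings UNIV A B" and f: "f \<in> repairs E A s"
  shows "s \<circ> swap_along (defects E A s) f \<in> matchings E A B"
proof (rule matchings_comp_permutes[OF s])
  let ?D = "defects E A s"
  have f: "\<forall>a\<in>?D. f a \<in> A - ?D \<and> (a, s (f a)) \<in> E \<and> (f a, s a) \<in> E" "inj_on f ?D"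
    using f by (auto simp: repairs_def partners_def)
  then show "swap_along ?D f permutes A"
    by (intro swap_along_permutes) (auto simp: defects_def)
  show "\<forall>x\<in>A. (x, s (swap_along ?D f x)) \<in> E"
    using f by (auto simp: swap_along_def defects_def)
qed

lemma inj_on_repair:
  "inj_on (\<lambda>(s, f). (s \<circ> swap_along (defects E A s) f, defects E A s, f)) (Sigma S (repairs E A))"
proof (rule inj_onI)
  fix p q assume p: "p \<in> Sigma S (repairs E A)"
    and eq_pq: "(\<lambda>(s, f). (s \<circ> swap_along (defects E A s) f, defects E A s, f)) p
      = (\<lambda>(s, f). (s \<circ> swap_along (defects E A s) f, defects E A s, f)) q"
  obtain s f t g where pq: "p = (s, f)" "q = (t, g)"
    by (cases p, cases q)
  let ?D = "defects E A s"
  let ?\<sigma> = "swap_along ?D f"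
  have eq: "s \<circ> ?\<sigma> = t \<circ> ?\<sigma>" "f = g"
    using eq_pq pq by auto
  have "f \<in> Pi\<^sub>E ?D (partners E A s ?D)" "inj_on f ?D"
    using p pq by (simp_all add: repairs_def)
  then have "\<forall>a\<in>?D. f a \<in> partners E A s ?D a" "inj_on f ?D"
    by (simp_all add: PiE_iff)
  then have "f ` ?D \<inter> ?D = {}" "inj_on f ?D"
    using partners_subset[of E A s ?D] by blast+
  then have "?\<sigma> (?\<sigma> x) = x" for x
    by (rule swap_along_involution)
  then have "s = t"
    using eq(1) by (metis comp_apply ext)
  then show "p = q"
    using pq eq(2) by simp
qed

lemma finite_subsets_funcsets:
  assumes "finite A"
  shows "finite (SIGMA D:{D. D \<subseteq> A \<and> card D = k}. D \<rightarrow>\<^sub>E A)"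
proof (rule finite_SigmaI)
  show "finite {D. D \<subseteq> A \<and> card D = k}"
    by (rule finite_subset[of _ "Pow A"]) (use assms in auto)
  show "finite (D \<rightarrow>\<^sub>E A)" if "D \<in> {D. D \<subseteq> A \<and> card D = k}" for D
    using that assms finite_subset[of D A] by (simp add: finite_PiE)
qed

lemma card_subsets_funcsets:
  assumes "finite A"
  shows "card (SIGMA D:{D. D \<subseteq> A \<and> card D = k}. D \<rightarrow>\<^sub>E A) = (card A choose k) * card A ^ k"
proof -
  have "card (SIGMA D:{D. D \<subseteq> A \<and> card D = k}. D \<rightarrow>\<^sub>E A)
      = (\<Sum>D\<in>{D. D \<subseteq> A \<and> card D = k}. card (D \<rightarrow>\<^sub>E A))"
    using assms by (intro card_SigmaI) (auto intro: finite_PiE finite_subset)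
  also have "\<dots> = (\<Sum>D\<in>{D. D \<subseteq> A \<and> card D = k}. card A ^ k)"
    using assms by (intro sum.cong refl) (auto simp: card_PiE finite_subset)
  finally show ?thesis
    using n_subsets[OF assms] by simp
qed

lemma card_defects_eq_mult_le:
  assumes fin: "finite A" "finite B" and missing: "missing_degree_le E A B d"
  shows "card {s \<in> matchings UNIV A B. card (defects E A s) = k} * (\<Prod>j<k. card A - k - 2 * d - j)
    \<le> card (matchings E A B) * ((card A choose k) * card A ^ k)"
proof -
  define S where "S = {s \<in> matchings UNIV A B. card (defects E A s) = k}"
  let ?repair = "\<lambda>(s, f). (s \<circ> swap_along (defects E A s) f, defects E A s, f)"
  let ?target = "matchings E A B \<times> (SIGMA D:{D. D \<subseteq> A \<and> card D = k}. D \<rightarrow>\<^sub>E A)"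
  have "(\<Prod>j<k. card A - k - 2 * d - j) \<le> card (repairs E A s)" if "s \<in> S" for s
    using card_repairs_ge[OF fin _ missing, of s] that by (simp add: S_def)
  then have "card S * (\<Prod>j<k. card A - k - 2 * d - j) \<le> (\<Sum>s\<in>S. card (repairs E A s))"
    using sum_bounded_below[of S _ "\<lambda>s. card (repairs E A s)"] by simp
  also have "\<dots> = card (Sigma S (repairs E A))"
  proof (rule card_SigmaI[symmetric])
    show "finite S"
      using finite_matchings[OF fin] by (simp add: S_def)
    show "\<forall>s\<in>S. finite (repairs E A s)"
      using finite_repairs[OF fin(1)] by blast
  qed
  also have "\<dots> \<le> card ?target"
  proof (rule card_inj_on_le[OF inj_on_repair])
    show "?repair ` Sigma S (repairs E A) \<subseteq> ?target"
    proof (rule image_subsetI, elim SigmaE)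
      fix p s f assume p: "p = (s, f)" and s: "s \<in> S" and f: "f \<in> repairs E A s"
      have "Pi\<^sub>E (defects E A s) (partners E A s (defects E A s)) \<subseteq> defects E A s \<rightarrow>\<^sub>E A"
        using partners_subset[of E A s "defects E A s"] by (intro PiE_mono) blast
      then show "?repair p \<in> ?target"
        using matchings_comp_swap_along[OF _ f] s f defects_subset[of E A s]
        by (auto simp: p S_def repairs_def)
    qed
    show "finite ?target"
      using finite_matchings[OF fin] finite_subsets_funcsets[OF fin(1)] by simp
  qed
  also have "\<dots> = card (matchings E A B) * ((card A choose k) * card A ^ k)"
    using card_subsets_funcsets[OF fin(1)] by (simp add: card_cartesian_product)
  finally show ?thesis
    by (simp add: S_def)
qed

lemma card_defects_eq_le:
  assumes fin: "finite A" "finite B" and missing: "missing_degree_le E A B d"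
    and k: "k \<le> 2 * d" and small: "12 * d \<le> card A"
  shows "card {s \<in> matchings UNIV A B. card (defects E A s) = k}
    \<le> 2 ^ k * (card A choose k) * card (matchings E A B)"
proof -
  define P where "P = (\<Prod>j<k. card A - k - 2 * d - j)"
  define S where "S = card {s \<in> matchings UNIV A B. card (defects E A s) = k}"
  have "card A ^ k = (\<Prod>j<k. card A)"
    by simp
  also have "\<dots> \<le> (\<Prod>j<k. 2 * (card A - k - 2 * d - j))"
  proof (rule prod_mono)
    fix j assume "j \<in> {..<k}"
    then show "0 \<le> card A \<and> card A \<le> 2 * (card A - k - 2 * d - j)"
      using k small by simp
  qed
  also have "\<dots> = 2 ^ k * P"
    by (simp add: P_def prod.distrib)
  finally have "S * card A ^ k \<le> 2 ^ k * (S * P)"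
    by (simp add: algebra_simps)
  also have "S * P \<le> card (matchings E A B) * ((card A choose k) * card A ^ k)"
    unfolding S_def P_def by (rule card_defects_eq_mult_le[OF fin missing])
  finally have "S * card A ^ k \<le> (2 ^ k * (card A choose k) * card (matchings E A B)) * card A ^ k"
    by (simp add: algebra_simps)
  moreover have "0 < card A ^ k"
    using k small by (cases "card A = 0") auto
  ultimately show ?thesis
    unfolding S_def by (rule mult_right_le_imp_le)
qed

lemma fact_le_card_matchings:
  assumes fin: "finite A" "finite B" and card_eq: "card A = card B"
    and missing: "missing_degree_le E A B d" and small: "12 * d \<le> card A"
  shows "fact (card A) \<le> 2 * 3 ^ card A * card (matchings E A B)"
proof -
  define S where "S k = {s \<in> matchings UNIV A B. card (defects E A s) = k}" for k
  have "fact (card A) \<le> 2 * card {s \<in> matchings UNIV A B. card (defects E A s) \<le> 2 * d}"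
    using fact_le_card_few_defects[OF fin card_eq] missing by (simp add: missing_degree_le_def)
  also have "{s \<in> matchings UNIV A B. card (defects E A s) \<le> 2 * d} = (\<Union>k\<le>2 * d. S k)"
    by (auto simp: S_def)
  also have "card (\<Union>k\<le>2 * d. S k) = (\<Sum>k\<le>2 * d. card (S k))"
    using finite_matchings[OF fin] by (intro card_UN_disjoint) (auto simp: S_def)
  also have "\<dots> \<le> (\<Sum>k\<le>2 * d. 2 ^ k * (card A choose k) * card (matchings E A B))"
    using card_defects_eq_le[OF fin missing _ small] by (intro sum_mono) (simp add: S_def)
  also have "\<dots> \<le> (\<Sum>k\<le>card A. 2 ^ k * (card A choose k) * card (matchings E A B))"
    using small by (intro sum_mono2) auto
  also have "\<dots> = 3 ^ card A * card (matchings E A B)"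
    using binomial[of 2 1 "card A"] by (simp add: sum_distrib_left sum_distrib_right mult_ac)
  finally show ?thesis
    by simp
qed

lemma matchings_nonempty:
  assumes "finite A" "finite B" "card A = card B" "missing_degree_le E A B d" "12 * d \<le> card A"
  shows "matchings E A B \<noteq> {}"
  using fact_le_card_matchings[OF assms] by (auto simp: Suc_le_eq)

section \<open>Switching: matchings containing a partial matching\<close>

definition matchings_containing ::
  "('a \<times> 'b) set \<Rightarrow> 'a set \<Rightarrow> 'b set \<Rightarrow> ('a \<times> 'b) set \<Rightarrow> ('a \<Rightarrow> 'b) set" where
  "matchings_containing E A B T = {s \<in> matchings E A B. \<forall>(u, v)\<in>T. s u = v}"

lemma matchings_containing_nonempty_imp_inj_on:
  assumes "matchings_containing E A B T \<noteq> {}" "T \<subseteq> A \<times> B"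
  shows "inj_on fst T" "inj_on snd T"
proof -
  obtain s where "s \<in> matchings_containing E A B T"
    using assms(1) by blast
  then have s: "inj_on s A" "\<And>u v. (u, v) \<in> T \<Longrightarrow> s u = v"
    by (auto simp: matchings_containing_def matchings_iff bij_betw_def)
  show "inj_on fst T"
  proof (rule inj_onI)
    fix p q assume "p \<in> T" "q \<in> T" "fst p = fst q"
    then show "p = q"
      using s(2) by (cases p, cases q) auto
  qed
  show "inj_on snd T"
  proof (rule inj_onI)
    fix p q assume pq: "p \<in> T" "q \<in> T" "snd p = snd q"
    have "s (fst p) = snd p" "s (fst q) = snd q"
      using s(2) pq(1,2) by (metis prod.collapse)+
    then have "s (fst p) = s (fst q)"
      using pq(3) by simp
    moreover have "fst p \<in> A" "fst q \<in> A"
      using pq assms(2) by auto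
    ultimately have "fst p = fst q"
      using s(1) by (auto dest: inj_onD)
    then show "p = q"
      using pq by (simp add: prod_eq_iff)
  qed
qed

lemma matchings_containing_comp_transpose:
  assumes s: "s \<in> matchings_containing E A B T" and a: "a \<in> A" "a \<notin> fst ` T"
    and x: "x \<in> partners E A s (insert a (fst ` T)) a"
  shows "s \<circ> Transposition.transpose a x \<in> matchings_containing E A B T"
proof -
  have sE: "s \<in> matchings E A B" "\<forall>(u, v)\<in>T. s u = v"
    using s by (simp_all add: matchings_containing_def)
  have x: "x \<in> A" "x \<notin> fst ` T" "(a, s x) \<in> E" "(x, s a) \<in> E"
    using x by (simp_all add: partners_def)
  have "s \<circ> Transposition.transpose a x \<in> matchings E A B"
  proof (rule matchings_comp_permutes)
    show "s \<in> matchings UNIV A B"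
      using sE(1) matchings_mono[of E UNIV A B] by blast
    show "Transposition.transpose a x permutes A"
      using a(1) x(1) by (rule permutes_swap_id)
    show "\<forall>y\<in>A. (y, s (Transposition.transpose a x y)) \<in> E"
      using sE(1) x by (auto simp: matchings_iff Transposition.transpose_def)
  qed
  moreover have "\<forall>(u, v)\<in>T. (s \<circ> Transposition.transpose a x) u = v"
  proof clarify
    fix u v assume uv: "(u, v) \<in> T"
    then have "u \<noteq> a" "u \<noteq> x"
      using x(2) a(2) by (metis fst_conv image_eqI)+
    then show "(s \<circ> Transposition.transpose a x) u = v"
      using sE(2) uv by auto
  qed
  ultimately show ?thesis
    by (simp add: matchings_containing_def)
qed

text \<open>The switched map sends \<open>x\<close> to \<open>b\<close>; this recovers \<open>x\<close>, and then \<open>s\<close>.\<close>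

lemma inj_on_comp_transpose:
  assumes "a \<in> A"
  shows "inj_on (\<lambda>(s, x). s \<circ> Transposition.transpose a x)
    (SIGMA s:{s \<in> matchings E A B. s a = b}. A - {a})"
proof (rule inj_onI)
  fix p q
  assume p: "p \<in> (SIGMA s:{s \<in> matchings E A B. s a = b}. A - {a})"
    and q: "q \<in> (SIGMA s:{s \<in> matchings E A B. s a = b}. A - {a})"
    and eq: "(\<lambda>(s, x). s \<circ> Transposition.transpose a x) p = (\<lambda>(s, x). s \<circ> Transposition.transpose a x) q"
  obtain s x t y where pq: "p = (s, x)" "q = (t, y)"
    by (cases p, cases q)
  have st: "s a = b" "t a = b" "inj_on s A" and xy: "x \<in> A" "x \<noteq> a" "y \<in> A" "y \<noteq> a"
    using p q by (auto simp: pq matchings_iff bij_betw_def)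
  have sw: "s \<circ> Transposition.transpose a x = t \<circ> Transposition.transpose a y"
    using eq by (simp add: pq)
  have "x = y"
  proof (rule ccontr)
    assume "x \<noteq> y"
    then have "s y = s a"
      using fun_cong[OF sw, of y] xy st by simp
    then show False
      using inj_onD[OF st(3) _ xy(3) assms] xy(4) by simp
  qed
  moreover have "s = t"
  proof -
    have "s = (s \<circ> Transposition.transpose a x) \<circ> Transposition.transpose a x"
      by (simp add: comp_assoc)
    also have "\<dots> = t"
      using sw \<open>x = y\<close> by (simp add: comp_assoc)
    finally show ?thesis .
  qed
  ultimately show "p = q"
    by (simp add: pq)
qed

lemma card_matchings_containing_insert_mult_le:
  assumes fin: "finite A" "finite B" and missing: "missing_degree_le E A B d"
    and T: "finite T" "insert (a, b) T \<subseteq> A \<times> B" "(a, b) \<notin> T" "inj_on fst (insert (a, b) T)"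
  shows "card (matchings_containing E A B (insert (a, b) T)) * (card A - 1 - 2 * d - card T)
    \<le> card (matchings_containing E A B T)"
proof -
  define F where "F = matchings_containing E A B (insert (a, b) T)"
  define X where "X = insert a (fst ` T)"
  define P where "P s = partners E A s X a" for s
  have a: "a \<in> A" "a \<notin> fst ` T"
    using T(2-4) by (simp_all add: inj_on_insert)
  have X: "X \<subseteq> A" "card X \<le> Suc (card T)"
    using T(1,2) card_image_le[OF T(1), of fst] by (auto simp: X_def card_insert_if)
  have F: "F \<subseteq> {s \<in> matchings E A B. s a = b}" "F \<subseteq> matchings_containing E A B T"
    by (auto simp: F_def matchings_containing_def)
  have "card A - 1 - 2 * d - card T \<le> card (P s)" if "s \<in> F" for s
  proof -
    have "s \<in> matchings UNIV A B"
      using that F(1) matchings_mono[of E UNIV A B] by blast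
    then show ?thesis
      using card_partners_ge[OF fin _ a(1) X(1) missing] X(2) unfolding P_def by fastforce
  qed
  then have "card F * (card A - 1 - 2 * d - card T) \<le> (\<Sum>s\<in>F. card (P s))"
    using sum_bounded_below[of F _ "\<lambda>s. card (P s)"] by simp
  also have "\<dots> = card (Sigma F P)"
    using finite_subset[OF F(2)] finite_matchings[OF fin] fin(1)
    by (intro card_SigmaI[symmetric]) (auto simp: P_def matchings_containing_def partners_def)
  also have "\<dots> \<le> card (matchings_containing E A B T)"
  proof (rule card_inj_on_le)
    show "(\<lambda>(s, x). s \<circ> Transposition.transpose a x) ` Sigma F P \<subseteq> matchings_containing E A B T"
      using F(2) matchings_containing_comp_transpose[OF _ a] by (auto simp: P_def X_def)
    have "Sigma F P \<subseteq> (SIGMA s:{s \<in> matchings E A B. s a = b}. A - {a})"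
    proof (rule Sigma_mono[OF F(1)])
      show "P s \<subseteq> A - {a}" for s
        using partners_subset[of E A s X a] by (auto simp: P_def X_def)
    qed
    then show "inj_on (\<lambda>(s, x). s \<circ> Transposition.transpose a x) (Sigma F P)"
      using inj_on_comp_transpose[OF a(1)] by (rule inj_on_subset[rotated])
    show "finite (matchings_containing E A B T)"
      using finite_matchings[OF fin] by (simp add: matchings_containing_def)
  qed
  finally show ?thesis
    by (simp add: F_def)
qed

lemma card_matchings_containing_mult_le:
  assumes fin: "finite A" "finite B" and missing: "missing_degree_le E A B d"
    and T: "finite T" "T \<subseteq> A \<times> B" "inj_on fst T"
  shows "card (matchings_containing E A B T) * (\<Prod>j<card T. card A - 1 - 2 * d - j)
    \<le> card (matchings E A B)"
  using T
proof (induction T rule: finite_induct)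
  case empty
  then show ?case
    by (simp add: matchings_containing_def)
next
  case (insert p T)
  obtain a b where p: "p = (a, b)"
    by (cases p)
  have "card (matchings_containing E A B (insert p T)) * (\<Prod>j<card (insert p T). card A - 1 - 2 * d - j)
      = (card (matchings_containing E A B (insert p T)) * (card A - 1 - 2 * d - card T))
        * (\<Prod>j<card T. card A - 1 - 2 * d - j)"
    using insert.hyps by (simp add: mult_ac)
  also have "\<dots> \<le> card (matchings_containing E A B T) * (\<Prod>j<card T. card A - 1 - 2 * d - j)"
    using card_matchings_containing_insert_mult_le[OF fin missing insert.hyps(1), of a b] insert.hyps(2)
      insert.prems p
    by (intro mult_right_mono) simp_all
  also have "\<dots> \<le> card (matchings E A B)"
    using insert.IH insert.prems by (simp add: inj_on_insert)
  finally show ?case .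
qed

lemma card_matchings_containing_mult_power_le_small:
  assumes fin: "finite A" "finite B" and missing: "missing_degree_le E A B d"
    and small: "8 * d \<le> card A" and T: "T \<subseteq> A \<times> B" "inj_on fst T" "2 * card T \<le> card A"
  shows "card (matchings_containing E A B T) * card A ^ card T \<le> 4 ^ card T * card (matchings E A B)"
proof -
  define P where "P = (\<Prod>j<card T. card A - 1 - 2 * d - j)"
  have "card A ^ card T = (\<Prod>j<card T. card A)"
    by simp
  also have "\<dots> \<le> (\<Prod>j<card T. 4 * (card A - 1 - 2 * d - j))"
  proof (rule prod_mono)
    fix j assume "j \<in> {..<card T}"
    then show "0 \<le> card A \<and> card A \<le> 4 * (card A - 1 - 2 * d - j)"
      using small T(3) by simp
  qed
  also have "\<dots> = 4 ^ card T * P"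
    by (simp add: P_def prod.distrib)
  finally have "card (matchings_containing E A B T) * card A ^ card T
      \<le> 4 ^ card T * (card (matchings_containing E A B T) * P)"
    by (simp add: algebra_simps)
  also have "card (matchings_containing E A B T) * P \<le> card (matchings E A B)"
    unfolding P_def using fin T finite_subset[OF T(1)]
    by (intro card_matchings_containing_mult_le[OF fin missing]) auto
  finally show ?thesis
    by simp
qed

lemma card_matchings_containing_insert_le:
  assumes fin: "finite A" "finite B" and ab: "a \<in> A" "b \<in> B" and T: "T \<subseteq> (A - {a}) \<times> (B - {b})"
  shows "card (matchings_containing E A B (insert (a, b) T))
    \<le> card (matchings_containing E (A - {a}) (B - {b}) T)"
proof (cases "(a, b) \<in> E")
  case False
  then have "matchings_containing E A B (insert (a, b) T) = {}"
    using ab(1) by (auto simp: matchings_containing_def matchings_def)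
  then show ?thesis
    by simp
next
  case True
  let ?r = "\<lambda>s. restrict s (A - {a})"
  have bij: "bij_betw ?r {s \<in> matchings E A B. s a = b} (matchings E (A - {a}) (B - {b}))"
    using bij_betw_restrict_matchings[OF ab True] .
  show ?thesis
  proof (rule card_inj_on_le)
    show "inj_on ?r (matchings_containing E A B (insert (a, b) T))"
      using bij_betw_imp_inj_on[OF bij] by (rule inj_on_subset) (auto simp: matchings_containing_def)
    show "?r ` matchings_containing E A B (insert (a, b) T) \<subseteq> matchings_containing E (A - {a}) (B - {b}) T"
    proof
      fix r assume "r \<in> ?r ` matchings_containing E A B (insert (a, b) T)"
      then obtain s where s: "s \<in> {s \<in> matchings E A B. s a = b}" "\<forall>(u, v)\<in>T. s u = v"
        and r: "r = ?r s"
        by (auto simp: matchings_containing_def)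
      have "r \<in> matchings E (A - {a}) (B - {b})"
        using bij_betw_apply[OF bij s(1)] r by simp
      moreover have "\<forall>(u, v)\<in>T. r u = v"
        using s(2) T r by auto
      ultimately show "r \<in> matchings_containing E (A - {a}) (B - {b}) T"
        by (simp add: matchings_containing_def)
    qed
    show "finite (matchings_containing E (A - {a}) (B - {b}) T)"
      using fin by (simp add: matchings_containing_def finite_matchings)
  qed
qed

lemma card_matchings_containing_le_fact:
  assumes fin: "finite A" "finite B" and card_eq: "card A = card B"
    and T: "finite T" "T \<subseteq> A \<times> B" "inj_on fst T" "inj_on snd T"
  shows "card (matchings_containing E A B T) \<le> fact (card A - card T)"
  using T fin card_eq
proof (induction T arbitrary: A B rule: finite_induct)
  case empty
  then show ?case
    using card_mono[OF finite_matchings matchings_mono[of E UNIV A B]] card_matchings_UNIV[of A B]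
    by (simp add: matchings_containing_def)
next
  case (insert p T)
  obtain a b where p: "p = (a, b)"
    by (cases p)
  have ab: "a \<in> A" "b \<in> B" "a \<notin> fst ` T" "b \<notin> snd ` T"
    using insert.prems(1-3) insert.hyps(2) by (simp_all add: p inj_on_insert)
  have T_sub: "T \<subseteq> (A - {a}) \<times> (B - {b})"
  proof
    fix q assume "q \<in> T"
    then have "fst q \<in> fst ` T" "snd q \<in> snd ` T" "q \<in> A \<times> B"
      using insert.prems(1) by auto
    then show "q \<in> (A - {a}) \<times> (B - {b})"
      using ab(3,4) by (cases q) auto
  qed
  have "card (matchings_containing E A B (insert p T))
      \<le> card (matchings_containing E (A - {a}) (B - {b}) T)"
    unfolding p using insert.prems(4,5) ab(1,2) T_sub by (rule card_matchings_containing_insert_le)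
  also have "\<dots> \<le> fact (card (A - {a}) - card T)"
  proof (rule insert.IH[OF T_sub])
    show "inj_on fst T" "inj_on snd T"
      using insert.prems(2,3) by (auto intro: inj_on_subset)
    show "card (A - {a}) = card (B - {b})"
      using insert.prems(4-6) ab(1,2) by simp
  qed (use insert.prems in simp_all)
  also have "\<dots> = fact (card A - card (insert p T))"
    using insert.prems(4) insert.hyps ab(1) by simp
  finally show ?case .
qed

lemma power_self_le_fact:
  "n ^ n \<le> 3 ^ n * fact n"
proof -
  have "(\<Sum>i\<in>{n}. real n ^ i / fact i) \<le> (\<Sum>i. real n ^ i / fact i)"
    using summable_exp_generic[of "real n"]
    by (intro sum_le_suminf) (auto simp: divide_inverse mult.commute)
  also have "\<dots> = exp (real n)"
    by (simp add: exp_def scaleR_conv_of_real divide_inverse mult.commute)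
  also have "\<dots> = exp 1 ^ n"
    using exp_of_nat_mult[of n 1] by simp
  also have "\<dots> \<le> 3 ^ n"
    using e_less_272 by (intro power_mono) auto
  finally have "real (n ^ n) \<le> real (3 ^ n * fact n)"
    by (simp add: divide_le_eq)
  then show ?thesis
    by (simp only: of_nat_le_iff)
qed

lemma card_matchings_containing_mult_power_le_large:
  assumes fin: "finite A" "finite B" and card_eq: "card A = card B"
    and missing: "missing_degree_le E A B d" and small: "12 * d \<le> card A"
    and T: "T \<subseteq> A \<times> B" "inj_on fst T" "inj_on snd T" "card A < 2 * card T"
  shows "card (matchings_containing E A B T) * card A ^ card T \<le> 162 ^ card T * card (matchings E A B)"
proof -
  have "fst ` T \<subseteq> A"
    using T(1) by auto
  then have "card T \<le> card A"
    using card_inj_on_le[OF T(2)] fin(1) by blast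
  have "card (matchings_containing E A B T) * card A ^ card T \<le> fact (card A - card T) * card A ^ card T"
    using card_matchings_containing_le_fact[OF fin card_eq finite_subset[OF T(1)]] T fin by simp
  also have "\<dots> \<le> card A ^ (card A - card T) * card A ^ card T"
  proof (rule mult_right_mono)
    have "fact (card A - card T) \<le> (card A - card T) ^ (card A - card T)"
      using fact_le_power[of "card A - card T", where 'a = nat] by simp
    also have "\<dots> \<le> card A ^ (card A - card T)"
      by (rule power_mono) simp_all
    finally show "fact (card A - card T) \<le> card A ^ (card A - card T)" .
  qed simp
  also have "\<dots> = card A ^ card A"
    using \<open>card T \<le> card A\<close> by (simp flip: power_add)
  also have "\<dots> \<le> 3 ^ card A * fact (card A)"
    by (rule power_self_le_fact)
  also have "\<dots> \<le> 3 ^ card A * (2 * 3 ^ card A * card (matchings E A B))"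
    using fact_le_card_matchings[OF fin card_eq missing small] by simp
  also have "\<dots> = 2 * 9 ^ card A * card (matchings E A B)"
    by (simp add: power_mult_distrib[symmetric] mult_ac)
  also have "\<dots> \<le> 2 ^ card T * 81 ^ card T * card (matchings E A B)"
  proof (intro mult_right_mono mult_mono)
    show "2 \<le> (2::nat) ^ card T"
      using T(4) by (simp add: self_le_power)
    show "9 ^ card A \<le> (81::nat) ^ card T"
      using power_increasing[of "card A" "2 * card T" "9::nat"] T(4) by (simp add: power_mult)
  qed simp_all
  also have "\<dots> = 162 ^ card T * card (matchings E A B)"
    by (simp add: power_mult_distrib[symmetric])
  finally show ?thesis .
qed

lemma card_matchings_containing_mult_power_le:
  assumes fin: "finite A" "finite B" and card_eq: "card A = card B"
    and missing: "missing_degree_le E A B d" and small: "12 * d \<le> card A" and T: "T \<subseteq> A \<times> B"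
  shows "card (matchings_containing E A B T) * card A ^ card T \<le> 162 ^ card T * card (matchings E A B)"
proof (cases "matchings_containing E A B T = {}")
  case False
  note inj = matchings_containing_nonempty_imp_inj_on[OF False T]
  show ?thesis
  proof (cases "2 * card T \<le> card A")
    case True
    then have "card (matchings_containing E A B T) * card A ^ card T \<le> 4 ^ card T * card (matchings E A B)"
      using small by (intro card_matchings_containing_mult_power_le_small[OF fin missing _ T inj(1)]) simp_all
    also have "\<dots> \<le> 162 ^ card T * card (matchings E A B)"
      by (intro mult_right_mono power_mono) simp_all
    finally show ?thesis .
  next
    case False
    then show ?thesis
      using card_matchings_containing_mult_power_le_large[OF fin card_eq missing small T inj] by simp
  qed
qed simp

section \<open>The uniform distribution on perfect matchings\<close>

definition matching_pmf :: "('a \<times> 'b) set \<Rightarrow> 'a set \<Rightarrow> 'b set \<Rightarrow> ('a \<times> 'b) set pmf" where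
  "matching_pmf E A B = map_pmf (\<lambda>s. (\<lambda>a. (a, s a)) ` A) (pmf_of_set (matchings E A B))"

lemma perfect_matching_graph:
  assumes "s \<in> matchings E A B"
  shows "perfect_matching A B E ((\<lambda>a. (a, s a)) ` A)"
  unfolding perfect_matching_def
proof (intro conjI ballI)
  have s: "bij_betw s A B" "\<forall>a\<in>A. (a, s a) \<in> E"
    using assms by (auto simp: matchings_iff)
  then show "(\<lambda>a. (a, s a)) ` A \<subseteq> E"
    by auto
  show "\<exists>!b. (a, b) \<in> (\<lambda>a. (a, s a)) ` A" if "a \<in> A" for a
    using that by auto
  show "\<exists>!a. (a, b) \<in> (\<lambda>a. (a, s a)) ` A" if "b \<in> B" for b
    using that s(1) by (auto simp: bij_betw_def inj_on_def)
qed

lemma set_pmf_matching_pmf: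
  assumes fin: "finite A" "finite B" and card_eq: "card A = card B"
    and missing: "missing_degree_le E A B d" and small: "12 * d \<le> card A"
    and M: "M \<in> set_pmf (matching_pmf E A B)"
  shows "perfect_matching A B E M"
  using M matchings_nonempty[OF fin card_eq missing small] finite_matchings[OF fin, of E]
    perfect_matching_graph
  by (auto simp: matching_pmf_def)

lemma prob_matching_pmf_supset:
  assumes fin: "finite A" "finite B" and ne: "matchings E A B \<noteq> {}" and T: "T \<subseteq> A \<times> B"
  shows "measure_pmf.prob (matching_pmf E A B) {M. T \<subseteq> M}
    = card (matchings_containing E A B T) / card (matchings E A B)"
proof -
  have "matchings E A B \<inter> (\<lambda>s. (\<lambda>a. (a, s a)) ` A) -` {M. T \<subseteq> M} = matchings_containing E A B T"
    using T by (auto simp: matchings_containing_def)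
  then show ?thesis
    using measure_pmf_of_set[OF ne finite_matchings[OF fin]] by (simp add: matching_pmf_def)
qed

lemma prob_matching_pmf_supset_le:
  assumes fin: "finite A" "finite B" and card_eq: "card A = n" "card B = n"
    and missing: "missing_degree_le E A B d" and small: "12 * d \<le> n" and T: "T \<subseteq> A \<times> B"
  shows "measure_pmf.prob (matching_pmf E A B) {M. T \<subseteq> M} \<le> (162 / real n) ^ card T"
proof (cases "n = 0")
  case True
  then have "T = {}"
    using T fin card_eq by auto
  then show ?thesis
    by simp
next
  case False
  have ne: "matchings E A B \<noteq> {}"
    using matchings_nonempty[OF fin _ missing] card_eq small by simp
  have "card (matchings_containing E A B T) * n ^ card T \<le> 162 ^ card T * card (matchings E A B)"
    using card_matchings_containing_mult_power_le[OF fin _ missing _ T] card_eq small by simp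
  then have "real (card (matchings_containing E A B T)) * real n ^ card T
      \<le> 162 ^ card T * real (card (matchings E A B))"
    by (metis of_nat_le_iff of_nat_mult of_nat_numeral of_nat_power)
  then have "real (card (matchings_containing E A B T))
      \<le> (162 / real n) ^ card T * real (card (matchings E A B))"
    using False by (simp add: power_divide pos_le_divide_eq mult_ac)
  moreover have "0 < card (matchings E A B)"
    using ne finite_matchings[OF fin] by (simp add: card_gt_0_iff)
  ultimately show ?thesis
    unfolding prob_matching_pmf_supset[OF fin ne T] by (simp add: mult_imp_div_pos_le)
qed

lemma card_Diff_le_nat_floor:
  assumes "finite B" "S \<subseteq> B" "(1 - lam) * real (card B) \<le> real (card S)"
  shows "card (B - S) \<le> nat \<lfloor>lam * real (card B)\<rfloor>"
proof (rule le_nat_floor)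
  have "real (card (B - S)) = real (card B) - real (card S)"
    using assms(1,2) card_mono[OF assms(1,2)] by (simp add: card_Diff_subset finite_subset of_nat_diff)
  then show "real (card (B - S)) \<le> lam * real (card B)"
    using assms(3) by (simp add: algebra_simps)
qed

lemma missing_degree_le_of_min_degree:
  assumes "bip_graph A B E" "card A = I" "card B = I"
    and "\<forall>a\<in>A. real (deg0 E a) \<ge> (1 - lam) * real I" "\<forall>b\<in>B. real (deg1 E b) \<ge> (1 - lam) * real I"
  shows "missing_degree_le E A B (nat \<lfloor>lam * real I\<rfloor>)"
  unfolding missing_degree_le_def
proof (intro conjI ballI)
  have fin: "finite A" "finite B" and E: "E \<subseteq> A \<times> B"
    using assms(1) by (auto simp: bip_graph_def)
  fix a assume "a \<in> A"
  moreover have "E `` {a} \<subseteq> B"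
    using E by auto
  ultimately show "card (B - E `` {a}) \<le> nat \<lfloor>lam * real I\<rfloor>"
    using card_Diff_le_nat_floor[OF fin(2), of "E `` {a}" lam] assms(3,4)
    by (simp add: deg0_def Image_singleton)
next
  have fin: "finite A" "finite B" and E: "E \<subseteq> A \<times> B"
    using assms(1) by (auto simp: bip_graph_def)
  fix b assume "b \<in> B"
  moreover have "E\<inverse> `` {b} \<subseteq> A"
    using E by auto
  ultimately show "card (A - E\<inverse> `` {b}) \<le> nat \<lfloor>lam * real I\<rfloor>"
    using card_Diff_le_nat_floor[OF fin(1), of "E\<inverse> `` {b}" lam] assms(2,5)
    by (simp add: deg1_def Image_singleton)
qed

theorem corollary3p4:
  "\<exists>lam0::real. lam0 > 0 \<and> (\<exists>C::real. C > 0 \<and>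
     (\<forall>lam::real. \<forall>I::nat. \<forall>V0 V1 :: nat set. \<forall>E :: (nat \<times> nat) set.
        0 < lam \<and> lam \<le> lam0 \<and> bip_graph V0 V1 E \<and> card V0 = I \<and> card V1 = I \<and>
        (\<forall>a\<in>V0. real (deg0 E a) \<ge> (1 - lam) * real I) \<and>
        (\<forall>b\<in>V1. real (deg1 E b) \<ge> (1 - lam) * real I)
        \<longrightarrow> (\<exists>p :: (nat \<times> nat) set pmf.
               (\<forall>M\<in>set_pmf p. perfect_matching V0 V1 E M) \<and>
               (\<forall>T. T \<subseteq> E \<longrightarrow>
                  measure_pmf.prob p {M. T \<subseteq> M} \<le> (C / real I) ^ card T))))"
proof (rule exI[of _ "1 / 12"], intro conjI exI[of _ 162] allI impI)
  fix lam :: real and I V0 V1 and E :: "(nat \<times> nat) set"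
  assume H: "0 < lam \<and> lam \<le> 1 / 12 \<and> bip_graph V0 V1 E \<and> card V0 = I \<and> card V1 = I \<and>
    (\<forall>a\<in>V0. real (deg0 E a) \<ge> (1 - lam) * real I) \<and> (\<forall>b\<in>V1. real (deg1 E b) \<ge> (1 - lam) * real I)"
  then have fin: "finite V0" "finite V1" and E: "E \<subseteq> V0 \<times> V1"
    by (auto simp: bip_graph_def)
  define d where "d = nat \<lfloor>lam * real I\<rfloor>"
  have missing: "missing_degree_le E V0 V1 d"
    unfolding d_def using H by (intro missing_degree_le_of_min_degree) auto
  have "real d \<le> lam * real I"
    using H by (simp add: d_def)
  also have "\<dots> \<le> real I / 12"
    using mult_right_mono[of lam "1 / 12" "real I"] H by simp
  finally have small: "12 * d \<le> I"
    by simp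
  show "\<exists>p. (\<forall>M\<in>set_pmf p. perfect_matching V0 V1 E M) \<and>
      (\<forall>T. T \<subseteq> E \<longrightarrow> measure_pmf.prob p {M. T \<subseteq> M} \<le> (162 / real I) ^ card T)"
    using set_pmf_matching_pmf[OF fin _ missing] prob_matching_pmf_supset_le[OF fin _ _ missing small]
      H E small
    by (intro exI[of _ "matching_pmf E V0 V1"]) auto
qed simp_all

end
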